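(* Let the potential $v$ be continuous. Then the essential spectrum of the operator $H=\mathcal L+v(x)$ in $L^2(\mathbb R^d)$ contains the segments $[-\alpha,0]$ and $[-1,\max_x v(x)-1]$, where $[-\alpha,0]$ is the closure of the range of the function $\widehat a(k)-1$.
   Context: Consider in $L^2(\mathbb R^d)$ the operator $H=\mathcal L+v(x)$, where $\mathcal L\psi(x)=\int_{\mathbb R^d}(\psi(x+y)-\psi(x))a(y)\,dy$ (the jump intensity is normalized to $1$), with $a(y)=a(-y)$, $a\ge 0$, $\int_{\mathbb R^d}a(y)\,dy=1$, and the potential $v(x)\ge 0$ is compactly supported. Here $\widehat a(k)=\int_{\mathbb R^d}e^{-i(k,y)}a(y)\,dy=\int_{\mathbb R^d}\cos(k,y)\,a(y)\,dy$ is real-valued, satisfies $\widehat a(0)=1$, $|\widehat a(k)|<1$ for $k\neq 0$, $\widehat a(k)\to 0$ as $|k|\to\infty$, and it is assumed that $\widehat a\in L^1(\mathbb R^d)$. After the Fourier transform, $\mathcal L$ acts as multiplication by $\widehat a(k)-1$, and the closure of the range of $\widehat a(k)-1$ is a segment $[-\alpha,0]$ with $1\le\alpha\le 2$. *)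

theory Defs
  imports "HOL-Analysis.Analysis"
begin

text \<open>Functions on R^d (an arbitrary Euclidean space 'a) with complex values;
  L^2 is realised as square-integrable functions, with equalities taken almost everywhere.\<close>

definition L2 :: "('a::euclidean_space \<Rightarrow> complex) \<Rightarrow> bool" where
  "L2 f \<longleftrightarrow> f \<in> borel_measurable lborel \<and> integrable lborel (\<lambda>x. (norm (f x))\<^sup>2)"

definition L2norm :: "('a::euclidean_space \<Rightarrow> complex) \<Rightarrow> real" where
  "L2norm f = sqrt (LINT x|lborel. (norm (f x))\<^sup>2)"

text \<open>Fourier transform of the (even) jump kernel a.\<close>
definition ahat :: "('a::euclidean_space \<Rightarrow> real) \<Rightarrow> 'a \<Rightarrow> real" where
  "ahat a k = (LINT y|lborel. cos (k \<bullet> y) * a y)"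

definition Lop :: "('a::euclidean_space \<Rightarrow> real) \<Rightarrow> ('a \<Rightarrow> complex) \<Rightarrow> 'a \<Rightarrow> complex" where
  "Lop a \<psi> x = (LINT y|lborel. (\<psi> (x + y) - \<psi> x) * complex_of_real (a y))"

definition Hop :: "('a::euclidean_space \<Rightarrow> real) \<Rightarrow> ('a \<Rightarrow> real) \<Rightarrow> ('a \<Rightarrow> complex) \<Rightarrow> 'a \<Rightarrow> complex" where
  "Hop a v \<psi> x = Lop a \<psi> x + complex_of_real (v x) * \<psi> x"

definition in_resolvent :: "(('a::euclidean_space \<Rightarrow> complex) \<Rightarrow> ('a \<Rightarrow> complex)) \<Rightarrow> complex \<Rightarrow> bool" where
  "in_resolvent T lam \<longleftrightarrow> (\<exists>R C. (\<forall>f. L2 f \<longrightarrow> L2 (R f) \<and> L2norm (R f) \<le> C * L2norm f)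
      \<and> (\<forall>f. L2 f \<longrightarrow> (AE x in lborel. R (\<lambda>y. T f y - lam * f y) x = f x))
      \<and> (\<forall>f. L2 f \<longrightarrow> (AE x in lborel. T (R f) x - lam * R f x = f x)))"

definition spectrum_op :: "(('a::euclidean_space \<Rightarrow> complex) \<Rightarrow> ('a \<Rightarrow> complex)) \<Rightarrow> complex set" where
  "spectrum_op T = {lam. \<not> in_resolvent T lam}"

definition eigenfun :: "(('a::euclidean_space \<Rightarrow> complex) \<Rightarrow> ('a \<Rightarrow> complex)) \<Rightarrow> complex \<Rightarrow> ('a \<Rightarrow> complex) \<Rightarrow> bool" where
  "eigenfun T lam f \<longleftrightarrow> L2 f \<and> (AE x in lborel. T f x = lam * f x)"

definition discrete_spectrum :: "(('a::euclidean_space \<Rightarrow> complex) \<Rightarrow> ('a \<Rightarrow> complex)) \<Rightarrow> complex set" where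
  "discrete_spectrum T = {lam \<in> spectrum_op T.
      (\<exists>e>0. \<forall>\<mu> \<in> spectrum_op T. \<mu> \<noteq> lam \<longrightarrow> e \<le> dist \<mu> lam)
    \<and> (\<exists>f. eigenfun T lam f \<and> \<not> (AE x in lborel. f x = 0))
    \<and> (\<exists>B. finite B \<and> (\<forall>b\<in>B. eigenfun T lam b) \<and>
          (\<forall>g. eigenfun T lam g \<longrightarrow> (\<exists>c. AE x in lborel. g x = (\<Sum>b\<in>B. c b * b x))))}"

definition essential_spectrum :: "(('a::euclidean_space \<Rightarrow> complex) \<Rightarrow> ('a \<Rightarrow> complex)) \<Rightarrow> complex set" where
  "essential_spectrum T = spectrum_op T - discrete_spectrum T"

end

theory Submission
  imports Defs
begin

text \<open>
  Both inclusions are proved with Weyl sequences. For \<open>\<lambda> = ahat a k - 1\<close> take the plane wave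
  \<open>e^(i k\<cdot>x)\<close> cut off to a ball of radius \<open>R\<close> lying outside the support of \<open>v\<close>: there
  \<open>(H - \<lambda>)\<psi>\<close> only records jumps across the boundary of the ball, whose relative \<open>L\<^sup>2\<close> mass
  tends to \<open>0\<close> as \<open>R \<rightarrow> \<infinity>\<close>. For \<open>\<lambda> = v x\<^sub>0 - 1\<close> take the indicator of a small ball around
  \<open>x\<^sub>0\<close>: \<open>L\<psi> + \<psi>\<close> is the convolution of \<open>a\<close> with \<open>\<psi>\<close>, uniformly small by absolute
  continuity of the integral of \<open>a\<close>, and \<open>v - v x\<^sub>0\<close> is small on the ball by continuity.
  Approximate eigenvalues form a closed subset of the spectrum, and a point of a nondegenerate
  interval of approximate eigenvalues is not isolated, hence not in the discrete spectrum. The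
  closure of the range of \<open>ahat a - 1\<close> is an interval containing \<open>-1\<close> and \<open>0\<close>, and the closure
  of the range of \<open>v\<close> is an interval containing \<open>0\<close> and \<open>sup v\<close>.
\<close>

section \<open>Approximate eigenvalues\<close>

definition L2norm_sq :: "('a::euclidean_space \<Rightarrow> complex) \<Rightarrow> real" where
  "L2norm_sq f = (LINT x|lborel. (cmod (f x))\<^sup>2)"

definition approx_eigenvalue :: "(('a::euclidean_space \<Rightarrow> complex) \<Rightarrow> ('a \<Rightarrow> complex)) \<Rightarrow> complex \<Rightarrow> bool" where
  "approx_eigenvalue T lam \<longleftrightarrow> (\<forall>e>0. \<exists>\<psi>. L2 \<psi> \<and> L2 (\<lambda>x. T \<psi> x - lam * \<psi> x) \<and> L2norm_sq \<psi> > 0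
      \<and> L2norm_sq (\<lambda>x. T \<psi> x - lam * \<psi> x) \<le> e * L2norm_sq \<psi>)"

lemma L2norm_sq_nonneg: "L2norm_sq f \<ge> 0"
  unfolding L2norm_sq_def by simp

lemma L2norm_eq_sqrt: "L2norm f = sqrt (L2norm_sq f)"
  unfolding L2norm_def L2norm_sq_def ..

lemma L2norm_sq_cong_AE:
  assumes "L2 f" "L2 g" "AE x in lborel. f x = g x"
  shows "L2norm_sq f = L2norm_sq g"
  unfolding L2norm_sq_def
proof (rule integral_cong_AE)
  have [measurable]: "f \<in> borel_measurable borel" "g \<in> borel_measurable borel"
    using assms(1,2) unfolding L2_def by auto
  show "(\<lambda>x. (cmod (f x))\<^sup>2) \<in> borel_measurable lborel" by measurable
  show "(\<lambda>x. (cmod (g x))\<^sup>2) \<in> borel_measurable lborel" by measurable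
  show "AE x in lborel. (cmod (f x))\<^sup>2 = (cmod (g x))\<^sup>2"
    using assms(3) by eventually_elim simp
qed

lemma L2_pointwise_bound:
  assumes [measurable]: "g \<in> borel_measurable lborel"
    and G: "integrable lborel G" and le: "\<And>x. (cmod (g x))\<^sup>2 \<le> G x"
  shows "L2 g" and "L2norm_sq g \<le> (LINT x|lborel. G x)"
proof -
  have int: "integrable lborel (\<lambda>x. (cmod (g x))\<^sup>2)"
  proof (rule Bochner_Integration.integrable_bound[OF G])
    show "AE x in lborel. norm ((cmod (g x))\<^sup>2) \<le> norm (G x)"
      using le by (intro AE_I2) (simp add: order.trans[OF _ abs_ge_self])
  qed measurable
  then show "L2 g" unfolding L2_def by simp
  show "L2norm_sq g \<le> (LINT x|lborel. G x)"
    unfolding L2norm_sq_def by (rule integral_mono[OF int G le])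
qed

lemma L2_add_mult:
  assumes f: "L2 f" and g: "L2 g"
  shows "L2 (\<lambda>x. f x + c * g x)"
    and "L2norm_sq (\<lambda>x. f x + c * g x) \<le> 2 * L2norm_sq f + 2 * (cmod c)\<^sup>2 * L2norm_sq g"
proof -
  have [measurable]: "f \<in> borel_measurable borel" "g \<in> borel_measurable borel"
    using f g unfolding L2_def by auto
  have int: "integrable lborel (\<lambda>x. (cmod (f x))\<^sup>2)" "integrable lborel (\<lambda>x. (cmod (g x))\<^sup>2)"
    using f g unfolding L2_def by auto
  have le: "(cmod (f x + c * g x))\<^sup>2 \<le> 2 * (cmod (f x))\<^sup>2 + 2 * (cmod c)\<^sup>2 * (cmod (g x))\<^sup>2" for x
  proof -
    have "(cmod (f x + c * g x))\<^sup>2 \<le> (cmod (f x) + cmod c * cmod (g x))\<^sup>2"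
      by (rule power_mono) (auto intro: order.trans[OF norm_triangle_ineq] simp: norm_mult)
    also have "\<dots> \<le> 2 * (cmod (f x))\<^sup>2 + 2 * (cmod c)\<^sup>2 * (cmod (g x))\<^sup>2"
      using sum_squares_bound[of "cmod (f x)" "cmod c * cmod (g x)"]
      unfolding power2_sum power_mult_distrib by linarith
    finally show ?thesis .
  qed
  have meas: "(\<lambda>x. f x + c * g x) \<in> borel_measurable lborel" by measurable
  have G_int: "integrable lborel (\<lambda>x. 2 * (cmod (f x))\<^sup>2 + 2 * (cmod c)\<^sup>2 * (cmod (g x))\<^sup>2)"
    using int by auto
  note bound = L2_pointwise_bound[OF meas G_int le]
  show "L2 (\<lambda>x. f x + c * g x)" by (fact bound(1))
  have "(LINT x|lborel. 2 * (cmod (f x))\<^sup>2 + 2 * (cmod c)\<^sup>2 * (cmod (g x))\<^sup>2)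
      = 2 * L2norm_sq f + 2 * (cmod c)\<^sup>2 * L2norm_sq g"
    unfolding L2norm_sq_def using int by simp
  with bound(2)
  show "L2norm_sq (\<lambda>x. f x + c * g x) \<le> 2 * L2norm_sq f + 2 * (cmod c)\<^sup>2 * L2norm_sq g"
    by linarith
qed

lemma approx_eigenvalue_in_spectrum:
  assumes "approx_eigenvalue T lam"
  shows "lam \<in> spectrum_op T"
proof -
  have False if "in_resolvent T lam"
  proof -
    from that obtain R C where R_bounded: "\<And>f. L2 f \<Longrightarrow> L2 (R f) \<and> L2norm (R f) \<le> C * L2norm f"
      and R_left_inverse: "\<And>f. L2 f \<Longrightarrow> (AE x in lborel. R (\<lambda>y. T f y - lam * f y) x = f x)"
      unfolding in_resolvent_def by blast
    define e where "e = 1 / (2 * (C\<^sup>2 + 1))"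
    have "e > 0" unfolding e_def by (simp add: add_nonneg_pos)
    with assms obtain \<psi> where \<psi>: "L2 \<psi>" "L2 (\<lambda>x. T \<psi> x - lam * \<psi> x)" "L2norm_sq \<psi> > 0"
      "L2norm_sq (\<lambda>x. T \<psi> x - lam * \<psi> x) \<le> e * L2norm_sq \<psi>"
      unfolding approx_eigenvalue_def by blast
    define g where "g = (\<lambda>x. T \<psi> x - lam * \<psi> x)"
    have "L2 (R g)" and R_le: "L2norm (R g) \<le> C * L2norm g"
      using R_bounded \<psi>(2) unfolding g_def by auto
    have "L2norm_sq \<psi> = L2norm_sq (R g)"
      using L2norm_sq_cong_AE[OF \<open>L2 (R g)\<close> \<psi>(1)] R_left_inverse[OF \<psi>(1)] by (simp add: g_def)
    also have "\<dots> = (L2norm (R g))\<^sup>2" by (simp add: L2norm_eq_sqrt L2norm_sq_nonneg)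
    also have "\<dots> \<le> (C * L2norm g)\<^sup>2"
      using R_le by (intro power_mono) (auto simp: L2norm_eq_sqrt L2norm_sq_nonneg)
    also have "\<dots> = C\<^sup>2 * L2norm_sq g" by (simp add: L2norm_eq_sqrt L2norm_sq_nonneg power_mult_distrib)
    also have "\<dots> \<le> C\<^sup>2 * (e * L2norm_sq \<psi>)" using \<psi>(4) unfolding g_def by (simp add: mult_left_mono)
    also have "\<dots> < L2norm_sq \<psi>"
    proof -
      have "C\<^sup>2 * e < 1" unfolding e_def by (simp add: field_simps add_pos_nonneg)
      then show ?thesis using \<psi>(3) by (simp add: mult.assoc[symmetric])
    qed
    finally show False by simp
  qed
  then show ?thesis unfolding spectrum_op_def by blast
qed

lemma closed_approx_eigenvalues: "closed {lam. approx_eigenvalue T lam}"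
  unfolding closure_subset_eq[symmetric]
proof
  fix lam assume "lam \<in> closure {lam. approx_eigenvalue T lam}"
  then have near: "\<forall>e>0. \<exists>\<mu>. approx_eigenvalue T \<mu> \<and> dist \<mu> lam < e"
    by (simp add: closure_approachable)
  show "lam \<in> {lam. approx_eigenvalue T lam}"
    unfolding mem_Collect_eq approx_eigenvalue_def
  proof (intro allI impI)
    fix e :: real assume "e > 0"
    then obtain \<mu> where \<mu>: "approx_eigenvalue T \<mu>" "dist \<mu> lam < sqrt (e/4)"
      using near by (metis divide_pos_pos real_sqrt_gt_zero zero_less_numeral)
    from \<mu>(1) \<open>e > 0\<close> obtain \<psi> where \<psi>: "L2 \<psi>" "L2 (\<lambda>x. T \<psi> x - \<mu> * \<psi> x)" "L2norm_sq \<psi> > 0"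
        "L2norm_sq (\<lambda>x. T \<psi> x - \<mu> * \<psi> x) \<le> e/4 * L2norm_sq \<psi>"
      unfolding approx_eigenvalue_def by (meson divide_pos_pos zero_less_numeral)
    have split: "(\<lambda>x. T \<psi> x - lam * \<psi> x) = (\<lambda>x. (T \<psi> x - \<mu> * \<psi> x) + (\<mu> - lam) * \<psi> x)"
      by (auto simp: algebra_simps)
    have "(cmod (\<mu> - lam))\<^sup>2 \<le> (sqrt (e/4))\<^sup>2"
      using \<mu>(2) by (intro power_mono) (simp_all add: dist_norm)
    then have "(cmod (\<mu> - lam))\<^sup>2 * L2norm_sq \<psi> \<le> e/4 * L2norm_sq \<psi>"
      using \<open>e > 0\<close> by (intro mult_right_mono) (simp_all add: L2norm_sq_nonneg)
    then have "L2norm_sq (\<lambda>x. T \<psi> x - lam * \<psi> x) \<le> e * L2norm_sq \<psi>"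
      unfolding split using L2_add_mult(2)[OF \<psi>(2,1), of "\<mu> - lam"] \<psi>(4) by linarith
    then show "\<exists>\<psi>. L2 \<psi> \<and> L2 (\<lambda>x. T \<psi> x - lam * \<psi> x) \<and> L2norm_sq \<psi> > 0
        \<and> L2norm_sq (\<lambda>x. T \<psi> x - lam * \<psi> x) \<le> e * L2norm_sq \<psi>"
      using \<psi>(1,3) L2_add_mult(1)[OF \<psi>(2,1), of "\<mu> - lam"] split by auto
  qed
qed

lemma closed_real_approx_eigenvalues: "closed {t::real. approx_eigenvalue T (complex_of_real t)}"
  using closed_vimage[OF closed_approx_eigenvalues, of complex_of_real]
  by (simp add: vimage_def bounded_linear_of_real linear_continuous_on)

lemma interval_of_approx_eigenvalues_essential:
  assumes "p < q" and approx: "\<And>t. t \<in> {p..q} \<Longrightarrow> approx_eigenvalue T (complex_of_real t)"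
  shows "complex_of_real ` {p..q} \<subseteq> essential_spectrum T"
proof clarify
  fix t assume t: "t \<in> {p..q}"
  have in_spectrum: "complex_of_real s \<in> spectrum_op T" if "s \<in> {p..q}" for s
    using approx_eigenvalue_in_spectrum[OF approx[OF that]] .
  have "\<exists>s\<in>{p..q}. s \<noteq> t \<and> \<bar>s - t\<bar> < e" if "e > 0" for e
  proof -
    define \<delta> where "\<delta> = min (e / 2) ((q - p) / 2)"
    have \<delta>: "0 < \<delta>" "\<delta> < e" "\<delta> \<le> (q - p) / 2" unfolding \<delta>_def using that \<open>p < q\<close> by (auto simp: min_def)
    show ?thesis
      using t \<delta> by (intro bexI[of _ "if t + \<delta> \<le> q then t + \<delta> else t - \<delta>"]) auto
  qed
  then have "\<not> (\<exists>e>0. \<forall>\<mu>\<in>spectrum_op T. \<mu> \<noteq> complex_of_real t \<longrightarrow> e \<le> dist \<mu> (complex_of_real t))"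
    using in_spectrum by (fastforce simp: dist_norm simp flip: of_real_diff)
  then show "complex_of_real t \<in> essential_spectrum T"
    using in_spectrum[OF t] unfolding essential_spectrum_def discrete_spectrum_def by blast
qed

section \<open>Estimates for Lebesgue measure\<close>

lemma integral_lborel_reflect:
  fixes f :: "'a::euclidean_space \<Rightarrow> real"
  assumes [measurable]: "f \<in> borel_measurable borel"
  shows "(LINT y|lborel. f (- y)) = (LINT y|lborel. f y)"
proof -
  have "distr lborel borel uminus = (lborel :: 'a measure)"
    using lborel_affine[of "-1 :: real" "0 :: 'a"] by (simp add: density_1)
  then have "(LINT y|lborel. f y) = integral\<^sup>L (distr lborel borel uminus) f" by simp
  also have "\<dots> = (LINT y|lborel. f (- y))" by (rule integral_distr) auto
  finally show ?thesis ..
qed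

lemma indicator_ball_add:
  fixes c x y :: "'a::real_normed_vector"
  shows "indicator (ball c r) (x + y) = indicator (ball (c - x) r) y"
  by (simp add: indicator_def dist_norm diff_diff_eq)

lemma sets_borel_ball[measurable]: "ball c r \<in> sets borel"
  by simp

lemma L2_of_sq_indicator_ball:
  fixes \<psi> :: "'a::euclidean_space \<Rightarrow> complex"
  assumes [measurable]: "\<psi> \<in> borel_measurable borel"
    and sq: "\<And>x. (cmod (\<psi> x))\<^sup>2 = indicator (ball c r) x" and "r > 0"
  shows "L2 \<psi>" and "L2norm_sq \<psi> = unit_ball_vol DIM('a) * r ^ DIM('a)"
  using assms by (simp_all add: L2_def L2norm_sq_def sq emeasure_ball content_ball)

lemma small_ball_radius:
  assumes "\<delta> > 0" "r\<^sub>0 > 0"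
  obtains r where "0 < r" "r \<le> r\<^sub>0" "unit_ball_vol DIM('a::euclidean_space) * r ^ DIM('a) < \<delta>"
proof -
  have "((\<lambda>r. unit_ball_vol DIM('a) * r ^ DIM('a)) \<longlongrightarrow> unit_ball_vol DIM('a) * 0 ^ DIM('a)) (at_right 0)"
    by (intro tendsto_intros)
  then have "\<forall>\<^sub>F r in at_right 0. unit_ball_vol DIM('a) * r ^ DIM('a) < \<delta>"
    using assms by (intro order_tendstoD(2)) (simp_all add: zero_power)
  then obtain b where "b > 0" and b: "\<And>r. 0 < r \<Longrightarrow> r < b \<Longrightarrow> unit_ball_vol DIM('a) * r ^ DIM('a) < \<delta>"
    unfolding eventually_at_right_field by auto
  show ?thesis
    using that[of "min (b / 2) r\<^sub>0"] b[of "min (b / 2) r\<^sub>0"] \<open>b > 0\<close> assms by auto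
qed

lemma kernel_integral_bound:
  fixes F :: "'a::euclidean_space \<Rightarrow> 'a \<Rightarrow> real" and w b :: "'a \<Rightarrow> real"
  assumes F_meas[measurable]: "case_prod F \<in> borel_measurable (lborel \<Otimes>\<^sub>M lborel)"
    and F_01: "\<And>x y. 0 \<le> F x y \<and> F x y \<le> 1"
    and w_meas[measurable]: "w \<in> borel_measurable lborel" and w_nonneg: "\<And>y. 0 \<le> w y"
    and w_int: "integrable lborel w"
    and F_mass: "\<And>y. (\<integral>\<^sup>+x. ennreal (F x y) \<partial>lborel) \<le> ennreal (b y)"
    and b_nonneg: "\<And>y. 0 \<le> b y" and wb_int: "integrable lborel (\<lambda>y. w y * b y)"
  shows "integrable lborel (\<lambda>x. LINT y|lborel. F x y * w y)"
    and "(LINT x|lborel. LINT y|lborel. F x y * w y) \<le> (LINT y|lborel. w y * b y)"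
proof -
  have Fw_int: "integrable lborel (\<lambda>y. F x y * w y)" for x
  proof (rule Bochner_Integration.integrable_bound[OF w_int])
    show "AE y in lborel. norm (F x y * w y) \<le> norm (w y)"
      using F_01 w_nonneg by (auto intro!: AE_I2 simp: abs_mult mult_left_le_one_le)
  qed measurable
  have h_nonneg: "0 \<le> (LINT y|lborel. F x y * w y)" for x
    using F_01 w_nonneg by (auto intro!: integral_nonneg_AE AE_I2)
  have wb_nonneg: "0 \<le> (LINT y|lborel. w y * b y)"
    using w_nonneg b_nonneg by (auto intro!: integral_nonneg_AE AE_I2)
  have "(\<integral>\<^sup>+x. ennreal (LINT y|lborel. F x y * w y) \<partial>lborel)
      = (\<integral>\<^sup>+x. (\<integral>\<^sup>+y. ennreal (F x y * w y) \<partial>lborel) \<partial>lborel)"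
    by (rule nn_integral_cong, rule nn_integral_eq_integral[symmetric, OF Fw_int])
       (use F_01 w_nonneg in \<open>auto intro!: AE_I2\<close>)
  also have "\<dots> = (\<integral>\<^sup>+y. (\<integral>\<^sup>+x. ennreal (F x y * w y) \<partial>lborel) \<partial>lborel)"
    by (rule lborel_pair.Fubini'[symmetric]) measurable
  also have "\<dots> = (\<integral>\<^sup>+y. ennreal (w y) * (\<integral>\<^sup>+x. ennreal (F x y) \<partial>lborel) \<partial>lborel)"
    by (rule nn_integral_cong) (simp add: ennreal_mult'' F_01 w_nonneg nn_integral_cmult mult.commute)
  also have "\<dots> \<le> (\<integral>\<^sup>+y. ennreal (w y * b y) \<partial>lborel)"
    by (rule nn_integral_mono) (metis F_mass ennreal_mult'' b_nonneg mult.commute mult_left_mono zero_le)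
  also have "\<dots> = ennreal (LINT y|lborel. w y * b y)"
    by (rule nn_integral_eq_integral[OF wb_int]) (use w_nonneg b_nonneg in auto)
  finally have le: "(\<integral>\<^sup>+x. ennreal (LINT y|lborel. F x y * w y) \<partial>lborel)
      \<le> ennreal (LINT y|lborel. w y * b y)" .
  show h_int: "integrable lborel (\<lambda>x. LINT y|lborel. F x y * w y)"
    by (rule integrableI_nonneg)
       (use le h_nonneg in \<open>auto intro!: AE_I2 simp: top.not_eq_extremum le_less_trans\<close>)
  have "ennreal (LINT x|lborel. LINT y|lborel. F x y * w y)
      = (\<integral>\<^sup>+x. ennreal (LINT y|lborel. F x y * w y) \<partial>lborel)"
    by (rule nn_integral_eq_integral[symmetric, OF h_int]) (use h_nonneg in auto)
  with le have "ennreal (LINT x|lborel. LINT y|lborel. F x y * w y) \<le> ennreal (LINT y|lborel. w y * b y)"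
    by simp
  with wb_nonneg show "(LINT x|lborel. LINT y|lborel. F x y * w y) \<le> (LINT y|lborel. w y * b y)"
    by simp
qed

lemma power_diff_power_le:
  fixes R t :: real
  assumes "0 \<le> t" "t \<le> R"
  shows "(R + t) ^ n - (R - t) ^ n \<le> 2 * t * (real n * (2 * R) ^ (n - 1))"
proof -
  have term_le: "(R - t) ^ (n - Suc i) * (R + t) ^ i \<le> (2 * R) ^ (n - 1)" if "i < n" for i
  proof -
    have "(R - t) ^ (n - Suc i) * (R + t) ^ i \<le> (2 * R) ^ (n - Suc i) * (2 * R) ^ i"
      using assms by (intro mult_mono power_mono) auto
    also have "\<dots> = (2 * R) ^ (n - Suc i + i)" by (simp only: power_add)
    also have "n - Suc i + i = n - 1" using that by simp
    finally show ?thesis .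
  qed
  have "(R + t) ^ n - (R - t) ^ n = ((R + t) - (R - t)) * (\<Sum>i<n. (R - t) ^ (n - Suc i) * (R + t) ^ i)"
    by (rule power_diff_sumr2)
  also have "\<dots> \<le> ((R + t) - (R - t)) * (\<Sum>i<n. (2 * R) ^ (n - 1))"
    using assms term_le by (intro mult_left_mono sum_mono) auto
  also have "\<dots> = 2 * t * (real n * (2 * R) ^ (n - 1))" by simp
  finally show ?thesis .
qed

lemma emeasure_ball_shell:
  fixes c :: "'a::euclidean_space"
  assumes "0 \<le> t" "t \<le> R"
  shows "emeasure lborel (cball c (R + t) - ball c (R - t))
    = ennreal (unit_ball_vol DIM('a) * ((R + t) ^ DIM('a) - (R - t) ^ DIM('a)))"
proof -
  have "emeasure lborel (cball c (R + t) - ball c (R - t))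
      = emeasure lborel (cball c (R + t)) - emeasure lborel (ball c (R - t))"
    using assms emeasure_lborel_ball_finite[of c "R - t"] by (intro emeasure_Diff) auto
  also have "\<dots> = ennreal (unit_ball_vol DIM('a) * (R + t) ^ DIM('a))
      - ennreal (unit_ball_vol DIM('a) * (R - t) ^ DIM('a))"
    using assms by (simp add: emeasure_ball emeasure_cball)
  also have "\<dots> = ennreal (unit_ball_vol DIM('a) * ((R + t) ^ DIM('a) - (R - t) ^ DIM('a)))"
    using assms by (subst ennreal_minus) (auto intro!: power_mono simp: right_diff_distrib)
  finally show ?thesis .
qed

lemma emeasure_ball_symdiff_le_dist:
  fixes c c' :: "'a::euclidean_space"
  assumes "R > 0" "dist c c' \<le> R"
  shows "emeasure lborel (sym_diff (ball c R) (ball c' R))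
    \<le> ennreal (unit_ball_vol DIM('a) * R ^ DIM('a) * (real DIM('a) * 2 ^ DIM('a) * dist c c' / R))"
proof -
  let ?d = "DIM('a)" and ?t = "dist c c'"
  have "sym_diff (ball c R) (ball c' R) \<subseteq> cball c (R + ?t) - ball c (R - ?t)"
  proof
    fix x assume "x \<in> sym_diff (ball c R) (ball c' R)"
    moreover have "dist c x \<le> dist c c' + dist c' x" "dist c' x \<le> dist c' c + dist c x"
      by (rule dist_triangle)+
    ultimately show "x \<in> cball c (R + ?t) - ball c (R - ?t)" by (auto simp: dist_commute)
  qed
  then have "emeasure lborel (sym_diff (ball c R) (ball c' R))
      \<le> emeasure lborel (cball c (R + ?t) - ball c (R - ?t))"
    by (rule emeasure_mono) simp
  also have "\<dots> = ennreal (unit_ball_vol ?d * ((R + ?t) ^ ?d - (R - ?t) ^ ?d))"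
    using assms by (simp add: emeasure_ball_shell)
  also have "\<dots> \<le> ennreal (unit_ball_vol ?d * (2 * ?t * (real ?d * (2 * R) ^ (?d - 1))))"
    using assms by (intro ennreal_leI mult_left_mono power_diff_power_le) auto
  also have "2 * ?t * (real ?d * (2 * R) ^ (?d - 1)) = R ^ ?d * (real ?d * 2 ^ ?d * ?t / R)"
  proof -
    have "R ^ ?d = R * R ^ (?d - 1)" "(2::real) ^ ?d = 2 * 2 ^ (?d - 1)"
      by (simp_all flip: power_Suc)
    then show ?thesis using assms by (simp add: power_mult_distrib field_simps)
  qed
  finally show ?thesis by (simp add: mult.assoc)
qed

lemma emeasure_ball_symdiff_le:
  fixes c c' :: "'a::euclidean_space"
  assumes "R > 0"
  shows "emeasure lborel (sym_diff (ball c R) (ball c' R))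
    \<le> ennreal (unit_ball_vol DIM('a) * R ^ DIM('a) * min 2 (real DIM('a) * 2 ^ DIM('a) * dist c c' / R))"
    (is "emeasure lborel ?S \<le> ennreal (?V * min 2 (?D * dist c c' / R))")
proof -
  have trivial: "emeasure lborel ?S \<le> ennreal (?V * 2)"
  proof -
    have "emeasure lborel ?S \<le> emeasure lborel (ball c R) + emeasure lborel (ball c' R)"
      by (rule order.trans[OF emeasure_mono emeasure_subadditive]) auto
    also have "\<dots> = ennreal (?V * 2)"
      using assms by (simp add: emeasure_ball flip: ennreal_plus)
    finally show ?thesis .
  qed
  have "emeasure lborel ?S \<le> ennreal (?V * (?D * dist c c' / R))"
  proof (cases "dist c c' \<le> R")
    case True
    then show ?thesis using emeasure_ball_symdiff_le_dist[OF assms] by simp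
  next
    case False
    have "?D \<ge> 2"
      using DIM_positive[where 'a='a] power_increasing[of 1 "DIM('a)" "2::real"]
      by (intro order.trans[OF _ mult_mono[of 1 "real DIM('a)" 2]]) auto
    with False have "2 \<le> ?D * (dist c c' / R)"
      using assms by (intro order.trans[OF _ mult_mono[of 2 ?D 1]]) auto
    then have "?V * 2 \<le> ?V * (?D * dist c c' / R)"
      using assms by (intro mult_left_mono) auto
    with trivial show ?thesis by (meson ennreal_leI order_trans)
  qed
  with trivial show ?thesis
    by (cases "2 \<le> ?D * dist c c' / R") (simp_all add: min_def)
qed

section \<open>The jump kernel\<close>

locale jump_kernel =
  fixes a :: "'a::euclidean_space \<Rightarrow> real"
  assumes a_meas: "a \<in> borel_measurable lborel"
    and a_nonneg: "\<And>y. a y \<ge> 0"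
    and a_even: "\<And>y. a (- y) = a y"
    and a_int: "integrable lborel a"
    and a_norm: "(LINT y|lborel. a y) = 1"
begin

lemma a_borel[measurable]: "a \<in> borel_measurable borel"
  using a_meas by simp

lemma integrable_bounded_mult_kernel:
  fixes \<psi> :: "'a \<Rightarrow> complex"
  assumes [measurable]: "\<psi> \<in> borel_measurable borel" and bounded: "\<And>y. cmod (\<psi> y) \<le> B"
  shows "integrable lborel (\<lambda>y. \<psi> y * complex_of_real (a y))"
proof (rule Bochner_Integration.integrable_bound)
  show "integrable lborel (\<lambda>y. B * a y)" using a_int by simp
  show "AE y in lborel. norm (\<psi> y * complex_of_real (a y)) \<le> norm (B * a y)"
  proof (intro AE_I2)
    fix y
    have "cmod (\<psi> y) * a y \<le> B * a y" using bounded a_nonneg by (rule mult_right_mono)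
    then show "norm (\<psi> y * complex_of_real (a y)) \<le> norm (B * a y)"
      using a_nonneg[of y] by (simp add: norm_mult)
  qed
qed measurable

lemma Lop_bounded:
  fixes \<psi> :: "'a \<Rightarrow> complex"
  assumes [measurable]: "\<psi> \<in> borel_measurable borel" and bounded: "\<And>y. cmod (\<psi> y) \<le> B"
  shows "Lop a \<psi> x = (LINT y|lborel. \<psi> (x + y) * complex_of_real (a y)) - \<psi> x"
proof -
  have "integrable lborel (\<lambda>y. \<psi> (x + y) * complex_of_real (a y))"
    by (rule integrable_bounded_mult_kernel[of _ B]) (auto simp: bounded)
  moreover have "integrable lborel (\<lambda>y. \<psi> x * complex_of_real (a y))"
    by (rule integrable_bounded_mult_kernel[of _ "cmod (\<psi> x)"]) auto
  ultimately have "Lop a \<psi> x = (LINT y|lborel. \<psi> (x + y) * complex_of_real (a y))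
      - (LINT y|lborel. \<psi> x * complex_of_real (a y))"
    unfolding Lop_def by (simp add: algebra_simps)
  also have "(LINT y|lborel. \<psi> x * complex_of_real (a y)) = \<psi> x"
    using a_norm by simp
  finally show ?thesis .
qed

lemma integral_cis_kernel: "(LINT y|lborel. cis (k \<bullet> y) * complex_of_real (a y)) = complex_of_real (ahat a k)"
proof -
  have int_cos: "integrable lborel (\<lambda>y. cos (k \<bullet> y) * a y)"
    and int_sin: "integrable lborel (\<lambda>y. sin (k \<bullet> y) * a y)"
    by (rule Bochner_Integration.integrable_bound[OF a_int];
        auto intro!: AE_I2 simp: abs_mult a_nonneg mult_left_le_one_le)+
  have "(LINT y|lborel. sin (k \<bullet> y) * a y) = (LINT y|lborel. sin (k \<bullet> (- y)) * a (- y))"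
    by (rule integral_lborel_reflect[symmetric]) measurable
  also have "\<dots> = - (LINT y|lborel. sin (k \<bullet> y) * a y)" by (simp add: a_even)
  finally have sin_0: "(LINT y|lborel. sin (k \<bullet> y) * a y) = 0" by simp
  have "(\<lambda>y. cis (k \<bullet> y) * complex_of_real (a y))
      = (\<lambda>y. complex_of_real (cos (k \<bullet> y) * a y) + \<i> * complex_of_real (sin (k \<bullet> y) * a y))"
    by (auto simp: cis.ctr Complex_eq algebra_simps)
  then have "(LINT y|lborel. cis (k \<bullet> y) * complex_of_real (a y))
      = (LINT y|lborel. complex_of_real (cos (k \<bullet> y) * a y))
        + (LINT y|lborel. \<i> * complex_of_real (sin (k \<bullet> y) * a y))"
    using int_cos int_sin by (simp only: Bochner_Integration.integral_add integrable_of_real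
        integrable_mult_right)
  also have "\<dots> = complex_of_real (ahat a k)"
    by (simp only: integral_mult_right_zero integral_complex_of_real sin_0 ahat_def) simp
  finally show ?thesis .
qed

lemma ahat_0: "ahat a 0 = 1"
  unfolding ahat_def using a_norm by simp

lemma continuous_on_ahat: "continuous_on UNIV (ahat a)"
proof -
  have "(\<lambda>n. ahat a (u n)) \<longlonglongrightarrow> ahat a k" if "u \<longlonglongrightarrow> k" for u k
  proof -
    have "(\<lambda>n. LINT y|lborel. cos (u n \<bullet> y) * a y) \<longlonglongrightarrow> (LINT y|lborel. cos (k \<bullet> y) * a y)"
    proof (rule Bochner_Integration.integral_dominated_convergence[OF _ _ a_int])
      show "AE y in lborel. (\<lambda>n. cos (u n \<bullet> y) * a y) \<longlonglongrightarrow> cos (k \<bullet> y) * a y"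
        using that by (intro AE_I2 tendsto_intros)
      show "AE y in lborel. norm (cos (u n \<bullet> y) * a y) \<le> a y" for n
        by (intro AE_I2) (simp add: abs_mult a_nonneg mult_left_le_one_le)
    qed measurable
    then show ?thesis unfolding ahat_def .
  qed
  then show ?thesis
    by (auto intro!: continuous_at_imp_continuous_on continuous_at_sequentiallyI)
qed

lemma kernel_average_bounds:
  assumes [measurable]: "w \<in> borel_measurable borel" and "\<And>y. 0 \<le> w y" "\<And>y. w y \<le> 1"
  shows "0 \<le> (LINT y|lborel. w y * a y)" and "(LINT y|lborel. w y * a y) \<le> 1"
proof -
  have "integrable lborel (\<lambda>y. w y * a y)"
    by (rule Bochner_Integration.integrable_bound[OF a_int])
       (use assms a_nonneg in \<open>auto intro!: AE_I2 simp: abs_mult mult_left_le_one_le\<close>)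
  then have "(LINT y|lborel. w y * a y) \<le> (LINT y|lborel. a y)"
    using assms a_nonneg a_int by (intro integral_mono) (auto simp: mult_left_le_one_le)
  then show "(LINT y|lborel. w y * a y) \<le> 1" using a_norm by simp
  show "0 \<le> (LINT y|lborel. w y * a y)"
    using assms a_nonneg by (intro integral_nonneg_AE AE_I2) auto
qed

lemma integral_kernel_min_tendsto_0:
  assumes "D \<ge> 0"
  shows "(\<lambda>n. LINT y|lborel. a y * min 2 (D * norm y / real (Suc n))) \<longlonglongrightarrow> 0"
proof -
  have "(\<lambda>n. LINT y|lborel. a y * min 2 (D * norm y / real (Suc n))) \<longlonglongrightarrow> (LINT (y::'a)|lborel. 0)"
  proof (rule Bochner_Integration.integral_dominated_convergence
      [where s="\<lambda>n y. a y * min 2 (D * norm y / real (Suc n))" and w="\<lambda>y. 2 * a y"])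
    show "AE y in lborel. (\<lambda>n. a y * min 2 (D * norm y / real (Suc n))) \<longlonglongrightarrow> 0" 
    proof (intro AE_I2)
      fix y :: 'a
      have "(\<lambda>n. D * norm y / real (Suc n)) \<longlonglongrightarrow> 0"
        using LIMSEQ_Suc[OF lim_const_over_n[of "D * norm y"]] by simp
      then have "(\<lambda>n. a y * min 2 (D * norm y / real (Suc n))) \<longlonglongrightarrow> a y * min 2 0"
        by (intro tendsto_intros)
      then show "(\<lambda>n. a y * min 2 (D * norm y / real (Suc n))) \<longlonglongrightarrow> 0" by simp
    qed
    show "AE y in lborel. norm (a y * min 2 (D * norm y / real (Suc n))) \<le> 2 * a y" for n
    proof (intro AE_I2)
      fix y :: 'a
      have "a y * min 2 (D * norm y / real (Suc n)) \<le> a y * 2"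
        using a_nonneg by (intro mult_left_mono) auto
      then show "norm (a y * min 2 (D * norm y / real (Suc n))) \<le> 2 * a y"
        using assms a_nonneg[of y] by (simp add: abs_mult)
    qed
  qed (use a_int in auto)
  then show ?thesis by simp
qed

lemma integral_kernel_truncation_tendsto_0:
  "(\<lambda>n. LINT y|lborel. a y - min (a y) (real n)) \<longlonglongrightarrow> 0"
proof -
  have "(\<lambda>n. LINT y|lborel. a y - min (a y) (real n)) \<longlonglongrightarrow> (LINT (y::'a)|lborel. 0)"
  proof (rule Bochner_Integration.integral_dominated_convergence
      [where s="\<lambda>n y. a y - min (a y) (real n)", OF _ _ a_int])
    show "AE y in lborel. (\<lambda>n. a y - min (a y) (real n)) \<longlonglongrightarrow> 0"
    proof (intro AE_I2 tendsto_eventually)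
      fix y :: 'a
      show "\<forall>\<^sub>F n in sequentially. a y - min (a y) (real n) = 0"
        using eventually_ge_at_top[of "nat \<lceil>a y\<rceil>"] by eventually_elim linarith
    qed
    show "AE y in lborel. norm (a y - min (a y) (real n)) \<le> a y" for n
      using a_nonneg by (intro AE_I2) auto
  qed measurable
  then show ?thesis by simp
qed

lemma kernel_mass_small_sets:
  assumes "e > 0"
  obtains \<delta> where "\<delta> > 0"
    and "\<And>A. A \<in> sets borel \<Longrightarrow> emeasure lborel A < ennreal \<delta> \<Longrightarrow> (LINT y|lborel. indicator A y * a y) \<le> e"
proof -
  obtain n where tail: "(LINT y|lborel. a y - min (a y) (real n)) < e / 2"
    using eventually_happens'[OF _ order_tendstoD(2)[OF integral_kernel_truncation_tendsto_0, of "e / 2"]] assms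
    by auto
  define \<delta> where "\<delta> = e / (2 * (real n + 1))"
  have "\<delta> > 0" unfolding \<delta>_def using assms by simp
  moreover have "(LINT y|lborel. indicator A y * a y) \<le> e"
    if [measurable]: "A \<in> sets borel" and small: "emeasure lborel A < ennreal \<delta>" for A
  proof -
    have finite: "emeasure lborel A < \<infinity>" using small by (simp add: order.strict_trans)
    have int_head: "integrable lborel (\<lambda>y. indicator A y * min (a y) (real n))"
      by (rule Bochner_Integration.integrable_bound[of _ "\<lambda>y. real n * indicator A y"])
         (use finite a_nonneg in \<open>auto intro!: AE_I2 simp: integrable_indicator_iff split: split_indicator\<close>)
    have int_truncation: "integrable lborel (\<lambda>y. a y - min (a y) (real n))"
      by (rule Bochner_Integration.integrable_bound[OF a_int]) (use a_nonneg in \<open>auto intro!: AE_I2\<close>)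
    have int_tail: "integrable lborel (\<lambda>y. indicator A y * (a y - min (a y) (real n)))"
      by (rule Bochner_Integration.integrable_bound[OF a_int])
         (use a_nonneg in \<open>auto intro!: AE_I2 split: split_indicator\<close>)
    have "(LINT y|lborel. indicator A y * a y)
        = (LINT y|lborel. indicator A y * min (a y) (real n))
          + (LINT y|lborel. indicator A y * (a y - min (a y) (real n)))"
      by (subst Bochner_Integration.integral_add[OF int_head int_tail, symmetric]) (simp add: algebra_simps)
    also have "(LINT y|lborel. indicator A y * min (a y) (real n)) \<le> (LINT y|lborel. real n * indicator A y)"
      using int_head finite a_nonneg
      by (intro integral_mono) (auto simp: integrable_indicator_iff split: split_indicator)
    also have "\<dots> = real n * measure lborel A" by simp
    also have "\<dots> \<le> real n * \<delta>"
      using small finite by (intro mult_left_mono) (auto simp: measure_def enn2real_leI less_imp_le)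
    also have "\<dots> \<le> e / 2"
      unfolding \<delta>_def using assms by (simp add: field_simps)
    also have "(LINT y|lborel. indicator A y * (a y - min (a y) (real n)))
        \<le> (LINT y|lborel. a y - min (a y) (real n))"
      using int_tail int_truncation by (intro integral_mono) (auto split: split_indicator)
    finally show ?thesis using tail by linarith
  qed
  ultimately show ?thesis using that by blast
qed

lemma ball_boundary_kernel_bound:
  fixes c :: 'a
  assumes "R > 0"
  defines "h \<equiv> \<lambda>x. LINT y|lborel. \<bar>indicator (ball c R) (x + y) - indicator (ball c R) x\<bar> * a y"
  shows "integrable lborel h"
    and "(LINT x|lborel. h x) \<le> unit_ball_vol DIM('a) * R ^ DIM('a)
           * (LINT y|lborel. a y * min 2 (real DIM('a) * 2 ^ DIM('a) * norm y / R))"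
proof -
  let ?F = "\<lambda>x y. \<bar>indicator (ball c R) (x + y) - indicator (ball c R) x\<bar> :: real"
  let ?m = "\<lambda>y. min 2 (real DIM('a) * 2 ^ DIM('a) * norm y / R)"
  let ?b = "\<lambda>y. unit_ball_vol DIM('a) * R ^ DIM('a) * ?m y"
  have F_symdiff: "?F x y = indicator (sym_diff (ball (c - y) R) (ball c R)) x" for x y
  proof -
    have "indicator (ball c R) (x + y) = (indicator (ball (c - y) R) x :: real)"
      using indicator_ball_add[of c R y x] by (simp add: add.commute)
    then show ?thesis by (simp add: indicator_def)
  qed
  have F_mass: "(\<integral>\<^sup>+x. ennreal (?F x y) \<partial>lborel) \<le> ennreal (?b y)" for y
    unfolding F_symdiff using emeasure_ball_symdiff_le[OF assms(1), of "c - y" c]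
    by (simp add: dist_norm ennreal_indicator)
  have m_bounded: "norm (a y * ?m y) \<le> norm (2 * a y)" for y
    using a_nonneg[of y] mult_left_mono[of "?m y" 2 "a y"] assms by (simp add: abs_mult)
  have am_int: "integrable lborel (\<lambda>y. a y * ?m y)"
    by (rule Bochner_Integration.integrable_bound[of _ "\<lambda>y. 2 * a y"])
       (use a_int m_bounded in \<open>auto intro!: AE_I2\<close>)
  have ab_eq: "(\<lambda>y. a y * ?b y) = (\<lambda>y. unit_ball_vol DIM('a) * R ^ DIM('a) * (a y * ?m y))"
    by (simp add: fun_eq_iff algebra_simps)
  have ab_int: "integrable lborel (\<lambda>y. a y * ?b y)"
    unfolding ab_eq using am_int by simp
  have b_nonneg: "0 \<le> ?b y" for y
    using assms by simp
  have F_meas: "case_prod ?F \<in> borel_measurable (lborel \<Otimes>\<^sub>M lborel)"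
    by measurable
  have F_01: "0 \<le> ?F x y \<and> ?F x y \<le> 1" for x y
    by (simp split: split_indicator)
  note bound = kernel_integral_bound[OF F_meas F_01 a_meas a_nonneg a_int F_mass b_nonneg ab_int]
  show "integrable lborel h"
    unfolding h_def by (fact bound(1))
  have "(LINT x|lborel. h x) \<le> (LINT y|lborel. a y * ?b y)"
    unfolding h_def by (fact bound(2))
  also have "\<dots> = unit_ball_vol DIM('a) * R ^ DIM('a) * (LINT y|lborel. a y * ?m y)"
    unfolding ab_eq by simp
  finally show "(LINT x|lborel. h x) \<le> unit_ball_vol DIM('a) * R ^ DIM('a) * (LINT y|lborel. a y * ?m y)" .
qed

lemma ball_kernel_average:
  fixes x\<^sub>0 :: 'a
  assumes "r > 0"
  defines "c \<equiv> \<lambda>x. LINT y|lborel. indicator (ball x\<^sub>0 r) (x + y) * a y"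
  shows "0 \<le> c x" and "integrable lborel c"
    and "(LINT x|lborel. c x) \<le> unit_ball_vol DIM('a) * r ^ DIM('a)"
proof -
  let ?m = "unit_ball_vol DIM('a) * r ^ DIM('a)"
  have shift: "indicator (ball x\<^sub>0 r) (x + y) = (indicator (ball (x\<^sub>0 - y) r) x :: real)" for x y
    unfolding add.commute[of x y] by (rule indicator_ball_add)
  show "0 \<le> c x"
    unfolding c_def by (rule kernel_average_bounds) (simp_all split: split_indicator)
  have F_mass: "(\<integral>\<^sup>+x. ennreal (indicator (ball x\<^sub>0 r) (x + y)) \<partial>lborel) \<le> ennreal ?m" for y
    unfolding shift using \<open>r > 0\<close> by (simp add: ennreal_indicator emeasure_ball)
  note bound = kernel_integral_bound[of "\<lambda>x y. indicator (ball x\<^sub>0 r) (x + y)" a "\<lambda>_. ?m",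
      OF _ _ a_meas a_nonneg a_int F_mass, folded c_def]
  show "integrable lborel c"
    using bound(1) a_int \<open>r > 0\<close> by (auto split: split_indicator)
  have "(LINT x|lborel. c x) \<le> (LINT y|lborel. a y * ?m)"
    using bound(2) a_int \<open>r > 0\<close> by (auto split: split_indicator)
  then show "(LINT x|lborel. c x) \<le> ?m" using a_norm by simp
qed

end

section \<open>Weyl sequences for \<open>H\<close>\<close>

definition plane_wave :: "'a::euclidean_space \<Rightarrow> 'a set \<Rightarrow> 'a \<Rightarrow> complex" where
  "plane_wave k B x = cis (k \<bullet> x) * indicator B x"

lemma borel_measurable_cis_inner[measurable]: "(\<lambda>x. cis (k \<bullet> x)) \<in> borel_measurable borel"
  by (intro borel_measurable_continuous_onI continuous_intros)

lemma plane_wave_borel[measurable]: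
  assumes [measurable]: "B \<in> sets borel"
  shows "plane_wave k B \<in> borel_measurable borel"
  unfolding plane_wave_def[abs_def] by measurable

lemma norm_plane_wave: "cmod (plane_wave k B x) = indicator B x"
  by (simp add: plane_wave_def norm_mult split: split_indicator)

lemma norm_plane_wave_sq: "(cmod (plane_wave k B x))\<^sup>2 = indicator B x"
  by (simp add: norm_plane_wave split: split_indicator)

locale jump_operator = jump_kernel a for a :: "'a::euclidean_space \<Rightarrow> real" +
  fixes v :: "'a \<Rightarrow> real"
  assumes v_cont: "continuous_on UNIV v"
    and v_supp: "compact (closure {x. v x \<noteq> 0})"
begin

lemma v_borel[measurable]: "v \<in> borel_measurable borel"
  using v_cont by (rule borel_measurable_continuous_onI)

lemma ball_outside_potential_support:
  fixes R :: real
  obtains c where "ball c R \<subseteq> {x. v x = 0}"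
proof -
  obtain \<rho> where \<rho>: "\<And>x. x \<in> closure {x. v x \<noteq> 0} \<Longrightarrow> norm x \<le> \<rho>"
    using compact_imp_bounded[OF v_supp] unfolding bounded_iff by blast
  obtain b :: 'a where "b \<in> Basis" using nonempty_Basis by blast
  define c where "c = (\<bar>R\<bar> + \<bar>\<rho>\<bar> + 1) *\<^sub>R b"
  have norm_c: "norm c = \<bar>R\<bar> + \<bar>\<rho>\<bar> + 1" unfolding c_def using \<open>b \<in> Basis\<close> by simp
  have "v x = 0" if "x \<in> ball c R" for x
  proof (rule ccontr)
    assume "v x \<noteq> 0"
    then have "norm x \<le> \<rho>" by (intro \<rho> closure_subset[THEN subsetD]) simp
    moreover have "norm c \<le> norm x + dist c x"
      using norm_triangle_sub[of c x] by (simp add: dist_norm)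
    moreover have "dist c x < R" using that by simp
    ultimately show False using norm_c by linarith
  qed
  then have "ball c R \<subseteq> {x. v x = 0}" by (simp add: subset_iff)
  then show ?thesis by (rule that)
qed

lemma plane_wave_residual_le:
  fixes k :: 'a and B :: "'a set"
  assumes [measurable]: "B \<in> sets borel" and v_B: "B \<subseteq> {x. v x = 0}"
  shows "cmod (Hop a v (plane_wave k B) x - complex_of_real (ahat a k - 1) * plane_wave k B x)
    \<le> (LINT y|lborel. \<bar>indicator B (x + y) - indicator B x\<bar> * a y)"
proof -
  let ?\<psi> = "plane_wave k B"
  have \<psi>_bounded: "cmod (?\<psi> x) \<le> 1" for x
    by (simp add: norm_plane_wave split: split_indicator)
  have int_shift: "integrable lborel (\<lambda>y. ?\<psi> (x + y) * complex_of_real (a y))"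
    by (rule integrable_bounded_mult_kernel[of _ 1]) (auto simp: \<psi>_bounded)
  have int_wave: "integrable lborel (\<lambda>y. (?\<psi> x * cis (k \<bullet> y)) * complex_of_real (a y))"
    by (rule integrable_bounded_mult_kernel[of _ 1]) (auto simp: norm_mult \<psi>_bounded)
  have ahat_wave: "complex_of_real (ahat a k) * ?\<psi> x
      = (LINT y|lborel. (?\<psi> x * cis (k \<bullet> y)) * complex_of_real (a y))"
    unfolding integral_cis_kernel[symmetric] mult.assoc by simp
  have v_\<psi>: "complex_of_real (v x) * ?\<psi> x = 0"
    using v_B unfolding plane_wave_def by (simp split: split_indicator) blast
  have "Hop a v ?\<psi> x - complex_of_real (ahat a k - 1) * ?\<psi> x
      = (LINT y|lborel. ?\<psi> (x + y) * complex_of_real (a y)) - complex_of_real (ahat a k) * ?\<psi> x"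
    unfolding Hop_def Lop_bounded[OF plane_wave_borel[OF assms(1)] \<psi>_bounded] v_\<psi>
    by (simp add: algebra_simps)
  also have "\<dots> = (LINT y|lborel. ?\<psi> (x + y) * complex_of_real (a y) - (?\<psi> x * cis (k \<bullet> y)) * complex_of_real (a y))"
    unfolding ahat_wave by (rule Bochner_Integration.integral_diff[OF int_shift int_wave, symmetric])
  also have "\<dots> = (LINT y|lborel. cis (k \<bullet> (x + y)) * complex_of_real ((indicator B (x + y) - indicator B x) * a y))"
  proof (rule Bochner_Integration.integral_cong[OF refl])
    fix y
    have "cis (k \<bullet> x) * cis (k \<bullet> y) = cis (k \<bullet> (x + y))" by (simp add: cis_mult inner_add_right)
    then show "?\<psi> (x + y) * complex_of_real (a y) - (?\<psi> x * cis (k \<bullet> y)) * complex_of_real (a y)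
        = cis (k \<bullet> (x + y)) * complex_of_real ((indicator B (x + y) - indicator B x) * a y)"
      unfolding plane_wave_def by (simp add: algebra_simps of_real_indicator)
  qed
  also have "cmod \<dots> \<le> (LINT y|lborel. cmod (cis (k \<bullet> (x + y)) * complex_of_real ((indicator B (x + y) - indicator B x) * a y)))"
    by (rule integral_norm_bound)
  also have "\<dots> = (LINT y|lborel. \<bar>indicator B (x + y) - indicator B x\<bar> * a y)"
    by (simp add: norm_mult abs_mult a_nonneg del: of_real_mult of_real_diff)
  finally show ?thesis .
qed

lemma plane_wave_residual_bound:
  fixes k c :: 'a
  assumes "R > 0" and v_ball: "ball c R \<subseteq> {x. v x = 0}"
  shows "L2 (\<lambda>x. Hop a v (plane_wave k (ball c R)) x - complex_of_real (ahat a k - 1) * plane_wave k (ball c R) x)"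
    and "L2norm_sq (\<lambda>x. Hop a v (plane_wave k (ball c R)) x - complex_of_real (ahat a k - 1) * plane_wave k (ball c R) x)
      \<le> unit_ball_vol DIM('a) * R ^ DIM('a)
        * (LINT y|lborel. a y * min 2 (real DIM('a) * 2 ^ DIM('a) * norm y / R))"
proof -
  define g where "g = (\<lambda>x. Hop a v (plane_wave k (ball c R)) x
    - complex_of_real (ahat a k - 1) * plane_wave k (ball c R) x)"
  define h where "h = (\<lambda>x. LINT y|lborel. \<bar>indicator (ball c R) (x + y) - indicator (ball c R) x\<bar> * a y)"
  have h_bounds: "0 \<le> h x" "h x \<le> 1" for x
    unfolding h_def by (rule kernel_average_bounds; simp split: split_indicator)+
  have g_sq: "(cmod (g x))\<^sup>2 \<le> h x" for x
  proof -
    have "cmod (g x) \<le> h x"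
      unfolding g_def h_def by (rule plane_wave_residual_le[OF _ v_ball]) simp
    then have "(cmod (g x))\<^sup>2 \<le> (h x)\<^sup>2" by (simp add: power_mono)
    also have "\<dots> \<le> h x" using h_bounds[of x] by (simp add: power2_eq_square mult_left_le_one_le)
    finally show ?thesis .
  qed
  have g_meas: "g \<in> borel_measurable lborel"
    unfolding g_def Hop_def Lop_def by measurable
  note boundary = ball_boundary_kernel_bound[OF \<open>R > 0\<close>, of c, folded h_def]
  note g_bound = L2_pointwise_bound[OF g_meas boundary(1) g_sq]
  show "L2 (\<lambda>x. Hop a v (plane_wave k (ball c R)) x - complex_of_real (ahat a k - 1) * plane_wave k (ball c R) x)"
    using g_bound(1) unfolding g_def .
  show "L2norm_sq (\<lambda>x. Hop a v (plane_wave k (ball c R)) x - complex_of_real (ahat a k - 1) * plane_wave k (ball c R) x)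
      \<le> unit_ball_vol DIM('a) * R ^ DIM('a)
        * (LINT y|lborel. a y * min 2 (real DIM('a) * 2 ^ DIM('a) * norm y / R))"
    using order.trans[OF g_bound(2) boundary(2)] unfolding g_def .
qed

lemma approx_eigenvalue_symbol: "approx_eigenvalue (Hop a v) (complex_of_real (ahat a k - 1))"
  unfolding approx_eigenvalue_def
proof (intro allI impI)
  fix e :: real assume "e > 0"
  obtain n where n: "(LINT y|lborel. a y * min 2 (real DIM('a) * 2 ^ DIM('a) * norm y / real (Suc n))) < e"
    using eventually_happens'[OF _ order_tendstoD(2)[OF integral_kernel_min_tendsto_0 \<open>e > 0\<close>]]
    by (metis of_nat_0_le_iff trivial_limit_sequentially zero_le_mult_iff zero_le_power zero_le_numeral)
  define R where "R = real (Suc n)"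
  have "R > 0" unfolding R_def by simp
  obtain c where v_ball: "ball c R \<subseteq> {x. v x = 0}"
    using ball_outside_potential_support[of R] by blast
  let ?\<psi> = "plane_wave k (ball c R)"
  have \<psi>_L2: "L2 ?\<psi>" "L2norm_sq ?\<psi> = unit_ball_vol DIM('a) * R ^ DIM('a)"
    by (rule L2_of_sq_indicator_ball[OF plane_wave_borel[OF sets_borel_ball] norm_plane_wave_sq \<open>R > 0\<close>])+
  note residual = plane_wave_residual_bound[OF \<open>R > 0\<close> v_ball, of k]
  have "L2norm_sq (\<lambda>x. Hop a v ?\<psi> x - complex_of_real (ahat a k - 1) * ?\<psi> x)
      \<le> unit_ball_vol DIM('a) * R ^ DIM('a)
        * (LINT y|lborel. a y * min 2 (real DIM('a) * 2 ^ DIM('a) * norm y / R))"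
    by (fact residual(2))
  also have "\<dots> \<le> unit_ball_vol DIM('a) * R ^ DIM('a) * e"
    using n \<open>R > 0\<close> unfolding R_def by (intro mult_left_mono) auto
  also have "\<dots> = e * L2norm_sq ?\<psi>"
    unfolding \<psi>_L2(2) by simp
  finally show "\<exists>\<psi>. L2 \<psi> \<and> L2 (\<lambda>x. Hop a v \<psi> x - complex_of_real (ahat a k - 1) * \<psi> x)
      \<and> L2norm_sq \<psi> > 0 \<and> L2norm_sq (\<lambda>x. Hop a v \<psi> x - complex_of_real (ahat a k - 1) * \<psi> x) \<le> e * L2norm_sq \<psi>"
    using \<psi>_L2 residual(1) \<open>R > 0\<close> by (intro exI[of _ ?\<psi>]) auto
qed

lemma indicator_residual:
  fixes A :: "'a set"
  assumes [measurable]: "A \<in> sets borel"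
  shows "Hop a v (indicator A) x - complex_of_real (v x\<^sub>0 - 1) * indicator A x
    = complex_of_real ((LINT y|lborel. indicator A (x + y) * a y) + (v x - v x\<^sub>0) * indicator A x)"
proof -
  have "cmod (indicator A y :: complex) \<le> 1" for y
    by (simp split: split_indicator)
  then have "Lop a (indicator A) x = (LINT y|lborel. indicator A (x + y) * complex_of_real (a y)) - indicator A x"
    by (intro Lop_bounded) auto
  also have "(LINT y|lborel. indicator A (x + y) * complex_of_real (a y))
      = (LINT y|lborel. complex_of_real (indicator A (x + y) * a y))"
    by (simp add: of_real_indicator)
  also have "\<dots> = complex_of_real (LINT y|lborel. indicator A (x + y) * a y)"
    by (rule integral_complex_of_real)
  finally show ?thesis
    unfolding Hop_def by (simp add: algebra_simps of_real_indicator)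
qed

lemma ball_indicator_residual_bound:
  fixes x\<^sub>0 :: 'a
  assumes "r > 0"
    and v_close: "\<And>x. x \<in> ball x\<^sub>0 r \<Longrightarrow> (v x - v x\<^sub>0)\<^sup>2 \<le> \<epsilon>"
    and mass: "\<And>x. (LINT y|lborel. indicator (ball x\<^sub>0 r) (x + y) * a y) \<le> \<epsilon>"
  defines "\<psi> \<equiv> indicator (ball x\<^sub>0 r) :: 'a \<Rightarrow> complex"
  shows "L2 (\<lambda>x. Hop a v \<psi> x - complex_of_real (v x\<^sub>0 - 1) * \<psi> x)"
    and "L2norm_sq (\<lambda>x. Hop a v \<psi> x - complex_of_real (v x\<^sub>0 - 1) * \<psi> x)
      \<le> 4 * \<epsilon> * (unit_ball_vol DIM('a) * r ^ DIM('a))"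
proof -
  let ?m = "unit_ball_vol DIM('a) * r ^ DIM('a)"
  define c where "c = (\<lambda>x. LINT y|lborel. indicator (ball x\<^sub>0 r) (x + y) * a y)"
  note c_props = ball_kernel_average[OF \<open>r > 0\<close>, of x\<^sub>0, folded c_def]
  define w where "w = (\<lambda>x. (v x - v x\<^sub>0) * indicator (ball x\<^sub>0 r) x)"
  define g where "g = (\<lambda>x. Hop a v \<psi> x - complex_of_real (v x\<^sub>0 - 1) * \<psi> x)"
  have g_eq: "g x = complex_of_real (c x + w x)" for x
    unfolding g_def \<psi>_def c_def w_def by (rule indicator_residual) simp
  define G where "G = (\<lambda>x. 2 * \<epsilon> * c x + 2 * \<epsilon> * indicator (ball x\<^sub>0 r) x)"
  have g_sq: "(cmod (g x))\<^sup>2 \<le> G x" for x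
  proof -
    have "(cmod (g x))\<^sup>2 \<le> 2 * (c x)\<^sup>2 + 2 * (w x)\<^sup>2"
      unfolding g_eq norm_of_real using sum_squares_bound[of "c x" "w x"] by (simp add: power2_sum)
    moreover have "(c x)\<^sup>2 \<le> \<epsilon> * c x"
      unfolding power2_eq_square using c_props(1) mass[of x] unfolding c_def
      by (intro mult_right_mono) auto
    moreover have "(w x)\<^sup>2 \<le> \<epsilon> * indicator (ball x\<^sub>0 r) x"
      unfolding w_def using v_close[of x] by (simp add: power_mult_distrib split: split_indicator)
    ultimately show ?thesis unfolding G_def by linarith
  qed
  have G_int: "integrable lborel G"
    unfolding G_def using c_props(2) \<open>r > 0\<close> by (simp add: emeasure_ball)
  have g_meas: "g \<in> borel_measurable lborel"
    unfolding g_def Hop_def Lop_def \<psi>_def by measurable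
  note g_bound = L2_pointwise_bound[OF g_meas G_int g_sq]
  show "L2 (\<lambda>x. Hop a v \<psi> x - complex_of_real (v x\<^sub>0 - 1) * \<psi> x)"
    using g_bound(1) unfolding g_def .
  have "\<epsilon> \<ge> 0" using v_close[of x\<^sub>0] \<open>r > 0\<close> by simp
  have "L2norm_sq g \<le> (LINT x|lborel. G x)" by (fact g_bound(2))
  also have "\<dots> = 2 * \<epsilon> * (LINT x|lborel. c x) + 2 * \<epsilon> * ?m"
    unfolding G_def using c_props(2) \<open>r > 0\<close> by (simp add: emeasure_ball content_ball)
  also have "\<dots> \<le> 4 * \<epsilon> * ?m"
    using mult_left_mono[OF c_props(3) \<open>\<epsilon> \<ge> 0\<close>] by simp
  finally show "L2norm_sq (\<lambda>x. Hop a v \<psi> x - complex_of_real (v x\<^sub>0 - 1) * \<psi> x) \<le> 4 * \<epsilon> * ?m"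
    unfolding g_def .
qed

lemma approx_eigenvalue_potential: "approx_eigenvalue (Hop a v) (complex_of_real (v x\<^sub>0 - 1))"
  unfolding approx_eigenvalue_def
proof (intro allI impI)
  fix e :: real assume "e > 0"
  obtain \<delta> where "\<delta> > 0" and small_mass:
    "\<And>A. A \<in> sets borel \<Longrightarrow> emeasure lborel A < ennreal \<delta> \<Longrightarrow> (LINT y|lborel. indicator A y * a y) \<le> e / 4"
    using kernel_mass_small_sets[of "e / 4"] \<open>e > 0\<close> by auto
  obtain r\<^sub>0 where "r\<^sub>0 > 0" and v_near: "\<And>x. dist x x\<^sub>0 < r\<^sub>0 \<Longrightarrow> dist (v x) (v x\<^sub>0) < sqrt (e / 4)"
    using v_cont \<open>e > 0\<close> unfolding continuous_on_iff
    by (metis UNIV_I divide_pos_pos real_sqrt_gt_zero zero_less_numeral)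
  obtain r where "0 < r" "r \<le> r\<^sub>0" and small: "unit_ball_vol DIM('a) * r ^ DIM('a) < \<delta>"
    using small_ball_radius[OF \<open>\<delta> > 0\<close> \<open>r\<^sub>0 > 0\<close>] by blast
  have v_close: "(v x - v x\<^sub>0)\<^sup>2 \<le> e / 4" if "x \<in> ball x\<^sub>0 r" for x
  proof -
    have "\<bar>v x - v x\<^sub>0\<bar> < sqrt (e / 4)"
      using v_near[of x] that \<open>r \<le> r\<^sub>0\<close> by (simp add: dist_real_def dist_commute)
    then have "\<bar>v x - v x\<^sub>0\<bar>\<^sup>2 \<le> (sqrt (e / 4))\<^sup>2" by (intro power_mono) auto
    then show ?thesis using \<open>e > 0\<close> by simp
  qed
  have mass: "(LINT y|lborel. indicator (ball x\<^sub>0 r) (x + y) * a y) \<le> e / 4" for x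
    unfolding indicator_ball_add using small \<open>r > 0\<close>
    by (intro small_mass) (auto simp: emeasure_ball ennreal_less_iff)
  define \<psi> :: "'a \<Rightarrow> complex" where "\<psi> = indicator (ball x\<^sub>0 r)"
  have \<psi>_meas: "\<psi> \<in> borel_measurable borel" unfolding \<psi>_def by measurable
  have \<psi>_sq: "(cmod (\<psi> x))\<^sup>2 = indicator (ball x\<^sub>0 r) x" for x
    unfolding \<psi>_def by (simp split: split_indicator)
  note \<psi>_L2 = L2_of_sq_indicator_ball[OF \<psi>_meas \<psi>_sq \<open>r > 0\<close>]
  note residual = ball_indicator_residual_bound[OF \<open>r > 0\<close> v_close mass, folded \<psi>_def]
  show "\<exists>\<psi>. L2 \<psi> \<and> L2 (\<lambda>x. Hop a v \<psi> x - complex_of_real (v x\<^sub>0 - 1) * \<psi> x)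
      \<and> L2norm_sq \<psi> > 0 \<and> L2norm_sq (\<lambda>x. Hop a v \<psi> x - complex_of_real (v x\<^sub>0 - 1) * \<psi> x) \<le> e * L2norm_sq \<psi>"
    using \<psi>_L2 residual \<open>r > 0\<close> by auto
qed

section \<open>Intervals in the essential spectrum\<close>

lemma zero_in_range_potential: "0 \<in> range v"
proof -
  obtain c where "ball c 1 \<subseteq> {x. v x = 0}"
    using ball_outside_potential_support[of 1] by blast
  moreover have "c \<in> ball c 1" by simp
  ultimately have "v c = 0" by blast
  then show ?thesis by (metis rangeI)
qed

lemma bdd_above_range_potential: "bdd_above (range v)"
proof -
  have "range v \<subseteq> insert 0 (v ` closure {x. v x \<noteq> 0})"
    using closure_subset by fastforce
  moreover have "compact (v ` closure {x. v x \<noteq> 0})"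
    using v_supp v_cont by (intro compact_continuous_image) (auto intro: continuous_on_subset)
  ultimately have "bounded (range v)"
    by (meson bounded_insert bounded_subset compact_imp_bounded)
  then show ?thesis by (rule bounded_imp_bdd_above)
qed

lemma closure_symbol_range_approx_eigenvalues:
  "closure (range (\<lambda>k. ahat a k - 1)) \<subseteq> {t. approx_eigenvalue (Hop a v) (complex_of_real t)}"
proof (rule closure_minimal)
  show "range (\<lambda>k. ahat a k - 1) \<subseteq> {t. approx_eigenvalue (Hop a v) (complex_of_real t)}"
    using approx_eigenvalue_symbol by blast
qed (rule closed_real_approx_eigenvalues)

lemma closure_symbol_range_contains:
  assumes "(ahat a \<longlongrightarrow> 0) at_infinity"
  shows "{-1..0} \<subseteq> closure (range (\<lambda>k. ahat a k - 1))"
proof (rule connected_contains_Icc)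
  show "connected (closure (range (\<lambda>k. ahat a k - 1)))"
    by (intro connected_imp_connected_closure connected_continuous_image connected_UNIV
        continuous_on_diff continuous_on_ahat continuous_on_const)
  show "0 \<in> closure (range (\<lambda>k. ahat a k - 1))"
    using closure_subset rangeI[of "\<lambda>k. ahat a k - 1" 0] by (force simp: ahat_0)
  obtain b :: 'a where "b \<in> Basis" using nonempty_Basis by blast
  then have "filterlim (\<lambda>n. real n *\<^sub>R b) at_infinity sequentially"
    by (intro filterlim_norm_at_top_imp_at_infinity) (simp add: filterlim_real_sequentially)
  then have "(\<lambda>n. ahat a (real n *\<^sub>R b) - 1) \<longlonglongrightarrow> 0 - 1"
    using assms by (intro tendsto_diff filterlim_compose[OF assms] tendsto_const)
  then show "-1 \<in> closure (range (\<lambda>k. ahat a k - 1))"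
    unfolding closure_sequential by force
qed

lemma symbol_range_essential_spectrum:
  assumes "(ahat a \<longlongrightarrow> 0) at_infinity"
  shows "complex_of_real ` closure (range (\<lambda>k. ahat a k - 1)) \<subseteq> essential_spectrum (Hop a v)"
proof clarify
  fix t assume t: "t \<in> closure (range (\<lambda>k. ahat a k - 1))"
  have "{min t (-1) .. max t 0} \<subseteq> closure (range (\<lambda>k. ahat a k - 1))"
    using closure_symbol_range_contains[OF assms] t
    by (intro connected_contains_Icc connected_imp_connected_closure connected_continuous_image
        connected_UNIV continuous_on_diff continuous_on_ahat continuous_on_const)
       (auto simp: min_def max_def)
  then have "complex_of_real ` {min t (-1) .. max t 0} \<subseteq> essential_spectrum (Hop a v)"
    using closure_symbol_range_approx_eigenvalues
    by (intro interval_of_approx_eigenvalues_essential) auto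
  then show "complex_of_real t \<in> essential_spectrum (Hop a v)" by auto
qed

lemma potential_range_essential_spectrum:
  assumes "(ahat a \<longlongrightarrow> 0) at_infinity"
  shows "complex_of_real ` {-1 .. (SUP x. v x) - 1} \<subseteq> essential_spectrum (Hop a v)"
proof -
  let ?E = "{t. approx_eigenvalue (Hop a v) (complex_of_real t)}"
  have "closed ((\<lambda>s. s - 1) -` ?E)"
    by (intro continuous_closed_vimage closed_real_approx_eigenvalues continuous_intros)
  moreover have "range v \<subseteq> (\<lambda>s. s - 1) -` ?E"
    using approx_eigenvalue_potential by blast
  ultimately have "closure (range v) \<subseteq> (\<lambda>s. s - 1) -` ?E"
    by (intro closure_minimal)
  moreover have "{0 .. (SUP x. v x)} \<subseteq> closure (range v)"
    using zero_in_range_potential bdd_above_range_potential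
    by (intro connected_contains_Icc connected_imp_connected_closure connected_continuous_image
        v_cont connected_UNIV closure_contains_Sup) (auto intro: closure_subset[THEN subsetD])
  ultimately have shifted: "{0 .. (SUP x. v x)} \<subseteq> (\<lambda>s. s - 1) -` ?E"
    by blast
  have "{-1 .. (SUP x. v x) - 1} \<subseteq> ?E"
  proof
    fix t assume "t \<in> {-1 .. (SUP x. v x) - 1}"
    then have "t + 1 \<in> {0 .. (SUP x. v x)}" by auto
    then show "t \<in> ?E" using shifted by force
  qed
  moreover have "{-1 .. 0} \<subseteq> ?E"
    using closure_symbol_range_contains[OF assms] closure_symbol_range_approx_eigenvalues by blast
  ultimately have "complex_of_real ` {-1 .. max 0 ((SUP x. v x) - 1)} \<subseteq> essential_spectrum (Hop a v)"
    by (intro interval_of_approx_eigenvalues_essential) (auto simp: max_def split: if_splits)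
  moreover have "{-1 .. (SUP x. v x) - 1} \<subseteq> {-1 .. max 0 ((SUP x. v x) - 1)}" by auto
  ultimately show ?thesis by blast
qed

end

theorem mainTheorem2:
  fixes a :: "'a::euclidean_space \<Rightarrow> real" and v :: "'a \<Rightarrow> real"
  assumes a_meas: "a \<in> borel_measurable lborel"
    and a_nonneg: "\<And>y. a y \<ge> 0"
    and a_even: "\<And>y. a (- y) = a y"
    and a_int: "integrable lborel a"
    and a_norm: "(LINT y|lborel. a y) = 1"
    and ahat_lt: "\<And>k. k \<noteq> 0 \<Longrightarrow> \<bar>ahat a k\<bar> < 1"
    and ahat_lim: "(ahat a \<longlongrightarrow> 0) at_infinity"
    and ahat_L1: "integrable lborel (ahat a)"
    and v_cont: "continuous_on UNIV v"
    and v_nonneg: "\<And>x. v x \<ge> 0"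
    and v_supp: "compact (closure {x. v x \<noteq> 0})"
  shows "complex_of_real ` closure (range (\<lambda>k. ahat a k - 1)) \<subseteq> essential_spectrum (Hop a v)
       \<and> complex_of_real ` {-1 .. (SUP x. v x) - 1} \<subseteq> essential_spectrum (Hop a v)"
proof -
  interpret jump_operator a v
    by unfold_locales (fact a_meas a_nonneg a_even a_int a_norm v_cont v_supp)+
  show ?thesis
    using symbol_range_essential_spectrum[OF ahat_lim] potential_range_essential_spectrum[OF ahat_lim] ..
qed

end
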